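(* Let $L$ be a Lie algebra over a field $K$ of characteristic different from $2$ and $3$. If $L$ has a subalgebra of codimension $1$ which is not an ideal, then $L$ possesses a nonzero commutative $2$-cocycle.
   Context: A commutative $2$-cocycle on $L$ is a symmetric bilinear form $\varphi:L\times L\to K$ such that $\varphi([x,y],z)+\varphi([z,x],y)+\varphi([y,z],x)=0$ for all $x,y,z\in L$. *)

theory Defs
  imports Complex_Main
begin

definition lie_algebra ::
  "('k::field \<Rightarrow> 'v::ab_group_add \<Rightarrow> 'v) \<Rightarrow> ('v \<Rightarrow> 'v \<Rightarrow> 'v) \<Rightarrow> bool" where
  "lie_algebra scale br \<longleftrightarrow>
     vector_space scale \<and>
     (\<forall>x. Vector_Spaces.linear scale scale (br x)) \<and>
     (\<forall>y. Vector_Spaces.linear scale scale (\<lambda>x. br x y)) \<and>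
     (\<forall>x. br x x = 0) \<and>
     (\<forall>x y z. br x (br y z) + br y (br z x) + br z (br x y) = 0)"

definition lie_subalgebra ::
  "('k::field \<Rightarrow> 'v::ab_group_add \<Rightarrow> 'v) \<Rightarrow> ('v \<Rightarrow> 'v \<Rightarrow> 'v) \<Rightarrow> 'v set \<Rightarrow> bool" where
  "lie_subalgebra scale br S \<longleftrightarrow>
     module.subspace scale S \<and> (\<forall>x\<in>S. \<forall>y\<in>S. br x y \<in> S)"

definition lie_ideal ::
  "('k::field \<Rightarrow> 'v::ab_group_add \<Rightarrow> 'v) \<Rightarrow> ('v \<Rightarrow> 'v \<Rightarrow> 'v) \<Rightarrow> 'v set \<Rightarrow> bool" where
  "lie_ideal scale br I \<longleftrightarrow>
     module.subspace scale I \<and> (\<forall>x\<in>I. \<forall>y. br x y \<in> I \<and> br y x \<in> I)"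

definition codim_one ::
  "('k::field \<Rightarrow> 'v::ab_group_add \<Rightarrow> 'v) \<Rightarrow> 'v set \<Rightarrow> bool" where
  "codim_one scale S \<longleftrightarrow>
     (\<exists>v. v \<notin> S \<and> (\<forall>x. \<exists>c. \<exists>s\<in>S. x = scale c v + s))"

definition comm_2_cocycle ::
  "('k::field \<Rightarrow> 'v::ab_group_add \<Rightarrow> 'v) \<Rightarrow> ('v \<Rightarrow> 'v \<Rightarrow> 'v) \<Rightarrow> ('v \<Rightarrow> 'v \<Rightarrow> 'k) \<Rightarrow> bool" where
  "comm_2_cocycle scale br \<phi> \<longleftrightarrow>
     (\<forall>x. Vector_Spaces.linear scale (*) (\<phi> x)) \<and>
     (\<forall>y. Vector_Spaces.linear scale (*) (\<lambda>x. \<phi> x y)) \<and>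
     (\<forall>x y. \<phi> x y = \<phi> y x) \<and>
     (\<forall>x y z. \<phi> (br x y) z + \<phi> (br z x) y + \<phi> (br y z) x = 0)"

end

theory Submission
  imports Defs
begin

text \<open>Let S have codimension one, so L = K v \<oplus> S, and let f be the linear functional with kernel S
  and f v = 1. Expanding x = f(x) v + s and y = f(y) v + t and using [S,S] \<subseteq> S gives
  f[x,y] = f(x) g(y) - f(y) g(x) with g = f \<circ> ad v. Hence the rank-one form \<phi>(x,y) = f(x) f(y)
  satisfies \<phi>([x,y],z) + \<phi>([z,x],y) + \<phi>([y,z],x) = 0: the six terms cancel in pairs.
  It is a nonzero commutative 2-cocycle since \<phi>(v,v) = 1.\<close>

lemma vector_space_field_mult: "vector_space ((*) :: 'k::field \<Rightarrow> 'k \<Rightarrow> 'k)"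
  unfolding vector_space_def by (simp add: algebra_simps)

lemma lie_algebra_bracket_anticomm:
  assumes "lie_algebra scale br"
  shows "br y x = - br x y"
proof -
  have alt: "\<And>x. br x x = 0"
    and add_left: "\<And>z x y. br (x + y) z = br x z + br y z"
    and add_right: "\<And>z x y. br z (x + y) = br z x + br z y"
    using assms unfolding lie_algebra_def Vector_Spaces.linear_iff by auto
  have "0 = br (x + y) (x + y)" by (simp add: alt)
  also have "\<dots> = br x y + br y x"
    unfolding add_left add_right by (simp add: alt)
  finally show ?thesis by (metis add.commute eq_neg_iff_add_eq_0)
qed

lemma codim_one_functional:
  fixes scale :: "'k::field \<Rightarrow> 'v::ab_group_add \<Rightarrow> 'v"
  assumes vs: "vector_space scale" and sub: "module.subspace scale S"
    and "codim_one scale S"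
  obtains f v where "Vector_Spaces.linear scale (*) f" and "f v = 1"
    and "\<And>s. s \<in> S \<Longrightarrow> f s = 0" and "\<And>x. x - scale (f x) v \<in> S"
proof -
  interpret V: vector_space scale by (rule vs)
  obtain v where v_notin: "v \<notin> S" and decomp: "\<And>x. \<exists>c. x - scale c v \<in> S"
    using assms(3) unfolding codim_one_def by (metis add_diff_cancel_left')
  have coeff_unique: "c = d" if "x - scale c v \<in> S" "x - scale d v \<in> S" for x c d
  proof (rule ccontr)
    assume "c \<noteq> d"
    have "(x - scale d v) - (x - scale c v) \<in> S"
      using V.subspace_diff[OF sub that(2,1)] .
    then have "scale (c - d) v \<in> S"
      by (simp add: V.scale_left_diff_distrib)
    then have "scale (inverse (c - d)) (scale (c - d) v) \<in> S"
      by (rule V.subspace_scale[OF sub])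
    with \<open>c \<noteq> d\<close> v_notin show False by simp
  qed
  define f where "f x = (THE c. x - scale c v \<in> S)" for x
  have f_eq: "f x = c" if "x - scale c v \<in> S" for x c
    unfolding f_def using that coeff_unique by blast
  have f_decomp: "x - scale (f x) v \<in> S" for x
    using decomp f_eq by blast
  have "Vector_Spaces.linear scale (*) f"
    unfolding Vector_Spaces.linear_iff
  proof (intro conjI allI vs vector_space_field_mult)
    fix x y
    have "(x + y) - scale (f x + f y) v = (x - scale (f x) v) + (y - scale (f y) v)"
      by (simp add: algebra_simps)
    also have "\<dots> \<in> S"
      by (rule V.subspace_add[OF sub f_decomp f_decomp])
    finally show "f (x + y) = f x + f y"
      by (rule f_eq)
  next
    fix c x
    have "scale c x - scale (c * f x) v = scale c (x - scale (f x) v)"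
      by (simp add: V.scale_right_diff_distrib)
    also have "\<dots> \<in> S"
      by (rule V.subspace_scale[OF sub f_decomp])
    finally show "f (scale c x) = c * f x"
      by (rule f_eq)
  qed
  moreover have "f v = 1"
    using sub by (intro f_eq) (simp add: V.subspace_0)
  moreover have "f s = 0" if "s \<in> S" for s
    using that by (intro f_eq) simp
  ultimately show thesis using that f_decomp by blast
qed

lemma lie_bracket_expand:
  assumes lie: "lie_algebra scale br"
  shows "br (scale a v + s) (scale b v + t) = scale a (br v t) - scale b (br v s) + br s t"
proof -
  interpret V: vector_space scale
    using lie unfolding lie_algebra_def by blast
  have alt: "\<And>x. br x x = 0"
    and lin_right: "\<And>z. Vector_Spaces.linear scale scale (br z)"
    and lin_left: "\<And>z. Vector_Spaces.linear scale scale (\<lambda>x. br x z)"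
    using lie unfolding lie_algebra_def by auto
  show ?thesis
    using lin_left lin_right lie_algebra_bracket_anticomm[OF lie, of v s]
    unfolding Vector_Spaces.linear_iff by (simp add: alt algebra_simps)
qed

lemma codim_one_functional_bracket:
  assumes lie: "lie_algebra scale br" and subalg: "lie_subalgebra scale br S"
    and f_lin: "Vector_Spaces.linear scale (*) f"
    and f_S: "\<And>s. s \<in> S \<Longrightarrow> f s = 0"
    and f_decomp: "\<And>x. x - scale (f x) v \<in> S"
  shows "f (br x y) = f x * f (br v y) - f y * f (br v x)"
proof -
  interpret F: Vector_Spaces.linear scale "(*)" f by (rule f_lin)
  define s t where "s = x - scale (f x) v" and "t = y - scale (f y) v"
  have "s \<in> S" "t \<in> S"
    unfolding s_def t_def by (rule f_decomp)+
  then have f_br_st: "f (br s t) = 0"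
    using subalg unfolding lie_subalgebra_def by (blast intro: f_S)
  have ad_v: "br v (scale c v + u) = br v u" for c u
  proof -
    have "Vector_Spaces.linear scale scale (br v)" and "br v v = 0"
      using lie unfolding lie_algebra_def by auto
    then show ?thesis
      unfolding Vector_Spaces.linear_iff by simp
  qed
  have "br x y = br (scale (f x) v + s) (scale (f y) v + t)"
    by (simp add: s_def t_def)
  also have "\<dots> = scale (f x) (br v t) - scale (f y) (br v s) + br s t"
    by (rule lie_bracket_expand[OF lie])
  finally have "f (br x y) = f x * f (br v t) - f y * f (br v s)"
    by (simp add: F.add F.diff F.scale f_br_st)
  moreover have "f (br v y) = f (br v t)" and "f (br v x) = f (br v s)"
    using ad_v[of "f y" t] ad_v[of "f x" s] by (simp_all add: s_def t_def)
  ultimately show ?thesis by simp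
qed

lemma comm_2_cocycle_functional_square:
  assumes f_lin: "Vector_Spaces.linear scale (*) f"
    and f_br: "\<And>x y. f (br x y) = f x * g y - f y * g x"
  shows "comm_2_cocycle scale br (\<lambda>x y. f x * f y)"
proof -
  interpret F: Vector_Spaces.linear scale "(*)" f by (rule f_lin)
  have lin: "Vector_Spaces.linear scale (*) (\<lambda>y. f x * f y)" for x
    using F.vs1.vector_space_axioms vector_space_field_mult unfolding Vector_Spaces.linear_iff
    by (simp add: F.add F.scale distrib_left mult.left_commute)
  show ?thesis
    unfolding comm_2_cocycle_def
  proof (intro conjI allI)
    fix x y z
    show "Vector_Spaces.linear scale (*) (\<lambda>y. f x * f y)"
      by (rule lin)
    show "Vector_Spaces.linear scale (*) (\<lambda>x. f x * f y)"
      by (subst mult.commute) (rule lin)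
    show "f x * f y = f y * f x"
      by (rule mult.commute)
    show "f (br x y) * f z + f (br z x) * f y + f (br y z) * f x = 0"
      unfolding f_br by algebra
  qed
qed

theorem lemma2p2:
  fixes scale :: "'k::field \<Rightarrow> 'v::ab_group_add \<Rightarrow> 'v"
    and br :: "'v \<Rightarrow> 'v \<Rightarrow> 'v"
    and S :: "'v set"
  assumes "lie_algebra scale br"
    and "(2::'k) \<noteq> 0" and "(3::'k) \<noteq> 0"
    and "lie_subalgebra scale br S"
    and "codim_one scale S"
    and "\<not> lie_ideal scale br S"
  shows "\<exists>\<phi>. comm_2_cocycle scale br \<phi> \<and> (\<exists>x y. \<phi> x y \<noteq> 0)"
proof -
  have "vector_space scale" and "module.subspace scale S"
    using assms(1,4) unfolding lie_algebra_def lie_subalgebra_def by auto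
  with assms(5) obtain f v where f_lin: "Vector_Spaces.linear scale (*) f" and "f v = 1"
    and "\<And>s. s \<in> S \<Longrightarrow> f s = 0" and "\<And>x. x - scale (f x) v \<in> S"
    using codim_one_functional by metis
  then have "\<And>x y. f (br x y) = f x * f (br v y) - f y * f (br v x)"
    using assms(1,4) by (blast intro: codim_one_functional_bracket)
  then have "comm_2_cocycle scale br (\<lambda>x y. f x * f y)"
    by (rule comm_2_cocycle_functional_square[OF f_lin])
  moreover have "f v * f v \<noteq> 0"
    using \<open>f v = 1\<close> by simp
  ultimately show ?thesis by blast
qed

end
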